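(* Let $P$ be a convex polytope in $\mathbb{R}^D$ with vertices in $\mathbb{Z}^D$. Let $r>0$, and fix a set $F_r \subset B_r(nP)$. Let $A$ be chosen uniformly at random from all subsets $S\subset L(nP)$ such that $S\cap B_r(nP) = F_r$, and let $\mathbf{k}\in M_r(nP+nP)$. Then, for some constant $c > 0$ independent of $n$, $$\mathbb{P}[\mathbf{k} \notin A+A]\ \le\ c \left( \tfrac34 \right)^{ \left| L (nP \cap (\mathbf{k} - nP)) \right|/2}.$$
   Context: For $S \subset \mathbb{R}^D$, $L(S) = S\cap \mathbb{Z}^D$, and $nS$ is the dilation of $S$ by $n$ about the origin; $\mathbf{k}-nP = \{\mathbf{k}-\mathbf{x}:\mathbf{x}\in nP\}$. For a convex polytope $Q$ and $r>0$, $B_r(Q) = \{\mathbf{q}\in L(Q) : d(\mathbf{q},\mathbf{v})\le r \text{ for some vertex } \mathbf{v} \text{ of } Q\}$, with $d$ the Euclidean metric, and $M_r(Q) = L(Q)\setminus B_r(Q)$. For a set $A$, $A+A=\{a_1+a_2: a_1,a_2\in A\}$. *)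

theory Defs
  imports "HOL-Analysis.Analysis" "HOL-Probability.Probability"
begin

definition lattice_pts :: "(real ^ 'D) set \<Rightarrow> (real ^ 'D) set" where
  "lattice_pts S = {x \<in> S. \<forall>i. x $ i \<in> \<int>}"

definition dil :: "nat \<Rightarrow> (real ^ 'D) set \<Rightarrow> (real ^ 'D) set" where
  "dil n S = (\<lambda>x. real n *\<^sub>R x) ` S"

definition sumset :: "(real ^ 'D) set \<Rightarrow> (real ^ 'D) set \<Rightarrow> (real ^ 'D) set" where
  "sumset A B = {a + b | a b. a \<in> A \<and> b \<in> B}"

definition refl_set :: "real ^ 'D \<Rightarrow> (real ^ 'D) set \<Rightarrow> (real ^ 'D) set" where
  "refl_set k S = (\<lambda>x. k - x) ` S"

definition near_vertices :: "real \<Rightarrow> (real ^ 'D) set \<Rightarrow> (real ^ 'D) set" where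
  "near_vertices r Q = {q \<in> lattice_pts Q. \<exists>v. v extreme_point_of Q \<and> dist q v \<le> r}"

definition middle_pts :: "real \<Rightarrow> (real ^ 'D) set \<Rightarrow> (real ^ 'D) set" where
  "middle_pts r Q = lattice_pts Q - near_vertices r Q"

end

theory Submission
  imports Defs
begin

text \<open>
  Points of \<open>L(nP)\<close> that are not near a vertex are chosen independently with probability 1/2.
  If \<open>k \<notin> A + A\<close>, then for every pair \<open>{x, k - x}\<close> of such points in \<open>L(nP \<inter> (k - nP))\<close> at most
  one of \<open>x, k - x\<close> lies in \<open>A\<close>, an event of probability 3/4, independently over the pairs.
  The points near the vertices of \<open>nP\<close> are at most (number of vertices of \<open>P\<close>) \<times>
  (lattice points in a ball of radius \<open>r\<close>), a bound independent of \<open>n\<close>, so discarding the pairs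
  meeting them (and the midpoint \<open>k/2\<close>) only costs a constant factor.
\<close>

lemma finite_lattice_pts:
  fixes S :: "(real^'D) set"
  assumes "bounded S"
  shows "finite (lattice_pts S)"
proof -
  obtain B where B: "\<forall>x\<in>S. norm x \<le> B" using assms bounded_iff by blast
  define K where "K = \<lceil>B\<rceil>"
  have "lattice_pts S \<subseteq> (\<lambda>f. \<chi> i. of_int (f i)) ` (\<Pi>\<^sub>E i\<in>UNIV. {-K..K})"
  proof
    fix x assume "x \<in> lattice_pts S"
    then have xS: "x \<in> S" and xi: "\<And>i. x $ i \<in> \<int>" by (auto simp: lattice_pts_def)
    have "\<lfloor>x $ i\<rfloor> \<in> {-K..K}" for i
    proof -
      have "\<bar>x $ i\<bar> \<le> B" using B xS component_le_norm_cart order_trans by blast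
      moreover have "real_of_int \<lfloor>x $ i\<rfloor> = x $ i" using xi by (metis Ints_cases floor_of_int)
      moreover have "B \<le> real_of_int K" unfolding K_def by (rule le_of_int_ceiling)
      ultimately have "real_of_int (-K) \<le> real_of_int \<lfloor>x $ i\<rfloor> \<and> real_of_int \<lfloor>x $ i\<rfloor> \<le> real_of_int K"
        by auto
      then show ?thesis by (simp only: of_int_le_iff atLeastAtMost_iff)
    qed
    moreover have "x = (\<chi> i. of_int \<lfloor>x $ i\<rfloor>)" using xi by (simp add: vec_eq_iff)
    ultimately show "x \<in> (\<lambda>f. \<chi> i. of_int (f i)) ` (\<Pi>\<^sub>E i\<in>UNIV. {-K..K})"
      by (intro image_eqI[of _ _ "\<lambda>i. \<lfloor>x $ i\<rfloor>"]) auto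
  qed
  moreover have "finite (\<Pi>\<^sub>E i\<in>(UNIV::'D set). {-K..K})" by (intro finite_PiE) auto
  ultimately show ?thesis by (meson finite_imageI finite_subset)
qed

lemma extreme_point_of_linear_imageD:
  assumes "linear f" "inj f" "y extreme_point_of f ` S"
  shows "\<exists>x. x extreme_point_of S \<and> y = f x"
proof -
  from assms(3) obtain x where x: "x \<in> S" "y = f x"
    by (auto simp: extreme_point_of_def)
  have "x extreme_point_of S"
    unfolding extreme_point_of_def
  proof (intro conjI ballI x(1) notI)
    fix a b assume "a \<in> S" "b \<in> S" "x \<in> open_segment a b"
    then show False
      using assms x open_segment_linear_image[OF assms(1,2)] by (auto simp: extreme_point_of_def)
  qed
  then show ?thesis using x by blast
qed

lemma card_near_vertices_dil_le:
  fixes P :: "(real ^ 'D) set"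
  assumes "polytope P" "\<And>v. v extreme_point_of P \<Longrightarrow> \<forall>i. v $ i \<in> \<int>" "n \<noteq> 0"
  shows "card (near_vertices r (dil n P))
           \<le> card {v. v extreme_point_of P} * card (lattice_pts (cball (0::real^'D) r))"
proof -
  define E where "E = {v. v extreme_point_of P}"
  define Z where "Z = lattice_pts (cball (0::real^'D) r)"
  have finE: "finite E"
    unfolding E_def using finite_polyhedron_extreme_points polytope_imp_polyhedron assms(1) by blast
  have finZ: "finite Z" unfolding Z_def by (rule finite_lattice_pts) simp
  have "near_vertices r (dil n P) \<subseteq> (\<Union>u\<in>E. (\<lambda>z. real n *\<^sub>R u + z) ` Z)"
  proof
    fix q assume "q \<in> near_vertices r (dil n P)"
    then obtain v where q: "q \<in> lattice_pts (dil n P)" and v: "v extreme_point_of dil n P"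
      and qv: "dist q v \<le> r" unfolding near_vertices_def by blast
    obtain u where u: "u extreme_point_of P" and vu: "v = real n *\<^sub>R u"
      using extreme_point_of_linear_imageD[of "scaleR (real n)"] v assms(3)
      by (auto simp: dil_def linear_scaleR inj_on_def)
    have "q - v \<in> Z" unfolding Z_def lattice_pts_def
      using qv assms(2)[OF u] q vu
      by (auto simp: dist_norm norm_minus_commute lattice_pts_def Ints_diff Ints_mult)
    moreover have "q = real n *\<^sub>R u + (q - v)" using vu by simp
    ultimately show "q \<in> (\<Union>u\<in>E. (\<lambda>z. real n *\<^sub>R u + z) ` Z)"
      using u unfolding E_def by blast
  qed
  then have "card (near_vertices r (dil n P)) \<le> card (\<Union>u\<in>E. (\<lambda>z. real n *\<^sub>R u + z) ` Z)"
    using finE finZ by (intro card_mono) auto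
  also have "\<dots> \<le> (\<Sum>u\<in>E. card ((\<lambda>z. real n *\<^sub>R u + z) ` Z))" using finE by (rule card_UN_le)
  also have "\<dots> \<le> (\<Sum>u\<in>E. card Z)" by (intro sum_mono card_image_le finZ)
  finally show ?thesis unfolding E_def Z_def by simp
qed

definition pair_free_subsets :: "('a \<Rightarrow> 'a) \<Rightarrow> 'a set \<Rightarrow> 'a set \<Rightarrow> 'a set set" where
  "pair_free_subsets \<sigma> T W = {S. S \<subseteq> W \<and> (\<forall>x\<in>T. \<not> (x \<in> S \<and> \<sigma> x \<in> S))}"

lemma card_pair_free_subsets_remove_pair:
  assumes "finite W" "a \<in> T" "\<sigma> a \<in> T" "\<sigma> (\<sigma> a) = a"
  shows "card (pair_free_subsets \<sigma> T W)
           \<le> 3 * card (pair_free_subsets \<sigma> (T - {a, \<sigma> a}) (W - {a, \<sigma> a}))"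
proof -
  define G' where "G' = pair_free_subsets \<sigma> (T - {a, \<sigma> a}) (W - {a, \<sigma> a})"
  have finG': "finite G'" unfolding G'_def pair_free_subsets_def
    using assms(1) by (auto intro: finite_subset[of _ "Pow W"])
  have "pair_free_subsets \<sigma> T W \<subseteq> (\<lambda>(S, X). S \<union> X) ` (G' \<times> {{}, {a}, {\<sigma> a}})"
  proof
    fix S assume S: "S \<in> pair_free_subsets \<sigma> T W"
    then have "S \<inter> {a, \<sigma> a} \<in> {{}, {a}, {\<sigma> a}}" "S - {a, \<sigma> a} \<in> G'"
      using assms(2) unfolding pair_free_subsets_def G'_def by auto
    then show "S \<in> (\<lambda>(S, X). S \<union> X) ` (G' \<times> {{}, {a}, {\<sigma> a}})"
      by (intro image_eqI[of _ _ "(S - {a, \<sigma> a}, S \<inter> {a, \<sigma> a})"]) auto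
  qed
  then have "card (pair_free_subsets \<sigma> T W) \<le> card ((\<lambda>(S, X). S \<union> X) ` (G' \<times> {{}, {a}, {\<sigma> a}}))"
    using finG' by (intro card_mono) auto
  also have "\<dots> \<le> card (G' \<times> {{}, {a}, {\<sigma> a}})" using finG' by (intro card_image_le) simp
  also have "\<dots> \<le> 3 * card G'" by (simp add: card_cartesian_product card_insert_le_m1)
  finally show ?thesis unfolding G'_def .
qed

text \<open>\<open>\<sigma>\<close> splits \<open>T\<close> into \<open>card T / 2\<close> pairs, each of which excludes one of the four patterns.\<close>

lemma card_pair_free_subsets_le:
  assumes "finite W" "T \<subseteq> W" "\<forall>x\<in>T. \<sigma> x \<in> T \<and> \<sigma> x \<noteq> x \<and> \<sigma> (\<sigma> x) = x"
  shows "real (card (pair_free_subsets \<sigma> T W)) \<le> (3/4) powr (card T / 2) * 2 ^ card W"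
  using assms
proof (induction "card T" arbitrary: T W rule: less_induct)
  case less
  show ?case
  proof (cases "T = {}")
    case True
    then show ?thesis using less.prems by (simp add: pair_free_subsets_def Pow_def[symmetric] card_Pow)
  next
    case False
    then obtain a where aT: "a \<in> T" by blast
    let ?T' = "T - {a, \<sigma> a}" and ?W' = "W - {a, \<sigma> a}"
    have a: "\<sigma> a \<in> T" "\<sigma> a \<noteq> a" "\<sigma> (\<sigma> a) = a" using less.prems(3) aT by auto
    have finT: "finite T" using less.prems(1,2) finite_subset by blast
    have card_remove_pair: "card X = card (X - {a, \<sigma> a}) + 2"
      if "finite X" "a \<in> X" "\<sigma> a \<in> X" for X
    proof -
      have "card {a, \<sigma> a} = 2" using a(2) by simp
      moreover have "card {a, \<sigma> a} \<le> card X" using that by (intro card_mono) auto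
      ultimately show ?thesis using that by (simp add: card_Diff_subset)
    qed
    have cT: "card T = card ?T' + 2" using card_remove_pair[OF finT aT a(1)] .
    have cW: "card W = card ?W' + 2"
      using card_remove_pair[OF less.prems(1)] aT a(1) less.prems(2) by blast
    have inv': "\<forall>x\<in>?T'. \<sigma> x \<in> ?T' \<and> \<sigma> x \<noteq> x \<and> \<sigma> (\<sigma> x) = x"
    proof
      fix x assume x: "x \<in> ?T'"
      then have "\<sigma> x \<in> T" "\<sigma> x \<noteq> x" "\<sigma> (\<sigma> x) = x" using less.prems(3) by auto
      moreover have "\<sigma> x \<noteq> a" "\<sigma> x \<noteq> \<sigma> a" using x calculation(3) a(3) by auto
      ultimately show "\<sigma> x \<in> ?T' \<and> \<sigma> x \<noteq> x \<and> \<sigma> (\<sigma> x) = x" by blast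
    qed
    have "card ?T' < card T" "finite ?W'" "?T' \<subseteq> ?W'" using less.prems(1,2) cT by auto
    note IH = less.hyps[OF this inv']
    have "real (card (pair_free_subsets \<sigma> T W)) \<le> 3 * real (card (pair_free_subsets \<sigma> ?T' ?W'))"
      using card_pair_free_subsets_remove_pair[OF less.prems(1) aT a(1,3)] by linarith
    also have "\<dots> \<le> 3 * ((3/4) powr (card ?T' / 2) * 2 ^ card ?W')" using IH by linarith
    also have "\<dots> = (3/4) powr (card T / 2) * 2 ^ card W"
      using cT cW by (simp add: add_divide_distrib powr_add power_add)
    finally show ?thesis .
  qed
qed

lemma subsets_with_trace_eq:
  assumes "F \<subseteq> N" "N \<subseteq> U"
  shows "{S. S \<subseteq> U \<and> S \<inter> N = F} = (\<lambda>X. X \<union> F) ` Pow (U - N)"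
proof (intro equalityI subsetI)
  fix S assume "S \<in> {S. S \<subseteq> U \<and> S \<inter> N = F}"
  then show "S \<in> (\<lambda>X. X \<union> F) ` Pow (U - N)" by (intro image_eqI[of _ _ "S - N"]) auto
qed (use assms in auto)

lemma prob_pair_free_le:
  assumes "finite U" "F \<subseteq> N" "N \<subseteq> U" "T \<subseteq> U - N"
    and "\<forall>x\<in>T. \<sigma> x \<in> T \<and> \<sigma> x \<noteq> x \<and> \<sigma> (\<sigma> x) = x"
  shows "measure_pmf.prob (pmf_of_set {S. S \<subseteq> U \<and> S \<inter> N = F}) {S. \<forall>x\<in>T. \<not> (x \<in> S \<and> \<sigma> x \<in> S)}
           \<le> (3/4) powr (card T / 2)"
proof -
  let ?\<Omega> = "{S. S \<subseteq> U \<and> S \<inter> N = F}" and ?E = "{S. \<forall>x\<in>T. \<not> (x \<in> S \<and> \<sigma> x \<in> S)}"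
  let ?G = "pair_free_subsets \<sigma> T (U - N)"
  have \<Omega>: "?\<Omega> = (\<lambda>X. X \<union> F) ` Pow (U - N)" using assms(2,3) by (rule subsets_with_trace_eq)
  have "inj_on (\<lambda>X. X \<union> F) (Pow (U - N))" using assms(2) by (auto simp: inj_on_def)
  then have card\<Omega>: "card ?\<Omega> = 2 ^ card (U - N)" using assms(1) by (simp add: \<Omega> card_image card_Pow)
  have "?\<Omega> \<inter> ?E \<subseteq> (\<lambda>X. X \<union> F) ` ?G"
  proof
    fix S assume "S \<in> ?\<Omega> \<inter> ?E"
    then have "S - N \<in> ?G" "S = (S - N) \<union> F" by (auto simp: pair_free_subsets_def)
    then show "S \<in> (\<lambda>X. X \<union> F) ` ?G" by blast
  qed
  moreover have "finite ?G" using assms(1) by (auto simp: pair_free_subsets_def)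
  ultimately have "card (?\<Omega> \<inter> ?E) \<le> card ?G" by (meson card_image_le card_mono finite_imageI order_trans)
  moreover have "measure_pmf.prob (pmf_of_set ?\<Omega>) ?E = card (?\<Omega> \<inter> ?E) / card ?\<Omega>"
    using assms(1) by (intro measure_pmf_of_set) (auto simp: \<Omega>)
  ultimately have "measure_pmf.prob (pmf_of_set ?\<Omega>) ?E \<le> card ?G / 2 ^ card (U - N)"
    by (simp add: card\<Omega> divide_right_mono)
  also have "\<dots> \<le> (3/4) powr (card T / 2)"
    using card_pair_free_subsets_le[of "U - N" T \<sigma>] assms(1,4,5) by (simp add: divide_le_eq)
  finally show ?thesis .
qed

lemma card_le_card_pairs_avoiding:
  fixes k :: "real ^ 'D"
  assumes "finite T" "finite N"
  shows "card T \<le> card {x\<in>T. x \<notin> N \<and> k - x \<notin> N \<and> k - x \<noteq> x} + 2 * card N + 1"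
proof -
  let ?T' = "{x\<in>T. x \<notin> N \<and> k - x \<notin> N \<and> k - x \<noteq> x}"
  have "T \<subseteq> ?T' \<union> N \<union> (\<lambda>x. k - x) ` N \<union> {(1/2) *\<^sub>R k}"
  proof
    fix x assume x: "x \<in> T"
    have "k - x \<in> N \<Longrightarrow> x \<in> (\<lambda>x. k - x) ` N" by (intro image_eqI[of _ _ "k - x"]) auto
    moreover have "k - x = x \<Longrightarrow> x = (1/2) *\<^sub>R k" by (metis diff_eq_eq scaleR_2 scaleR_half_double)
    ultimately show "x \<in> ?T' \<union> N \<union> (\<lambda>x. k - x) ` N \<union> {(1/2) *\<^sub>R k}" using x by blast
  qed
  then have "card T \<le> card (?T' \<union> N \<union> (\<lambda>x. k - x) ` N \<union> {(1/2) *\<^sub>R k})"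
    using assms by (intro card_mono) auto
  also have "\<dots> \<le> card ?T' + card N + card ((\<lambda>x. k - x) ` N) + 1"
    using card_Un_le[of "?T' \<union> N \<union> (\<lambda>x. k - x) ` N" "{(1/2) *\<^sub>R k}"]
      card_Un_le[of "?T' \<union> N" "(\<lambda>x. k - x) ` N"] card_Un_le[of ?T' N] by simp
  also have "\<dots> \<le> card ?T' + 2 * card N + 1" using card_image_le[OF assms(2)] by simp
  finally show ?thesis .
qed

lemma lattice_pts_Int_refl_set_closed:
  assumes "\<forall>i. k $ i \<in> \<int>" "x \<in> lattice_pts (S \<inter> refl_set k S)"
  shows "k - x \<in> lattice_pts (S \<inter> refl_set k S)"
  using assms by (force simp: lattice_pts_def refl_set_def Ints_diff)

lemma prob_notin_sumset_le:
  fixes k :: "real ^ 'D"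
  assumes "finite U" "F \<subseteq> N" "N \<subseteq> U" "card N \<le> b" "T \<subseteq> U" "\<And>x. x \<in> T \<Longrightarrow> k - x \<in> T"
  shows "measure_pmf.prob (pmf_of_set {S. S \<subseteq> U \<and> S \<inter> N = F}) {A. k \<notin> sumset A A}
           \<le> (3/4) powr (- (2 * real b + 1) / 2) * (3/4) powr (card T / 2)"
proof -
  define T' where "T' = {x\<in>T. x \<notin> N \<and> k - x \<notin> N \<and> k - x \<noteq> x}"
  have "{A. k \<notin> sumset A A} \<subseteq> {S. \<forall>x\<in>T'. \<not> (x \<in> S \<and> k - x \<in> S)}"
    by (force simp: sumset_def)
  then have "measure_pmf.prob (pmf_of_set {S. S \<subseteq> U \<and> S \<inter> N = F}) {A. k \<notin> sumset A A}
      \<le> measure_pmf.prob (pmf_of_set {S. S \<subseteq> U \<and> S \<inter> N = F}) {S. \<forall>x\<in>T'. \<not> (x \<in> S \<and> k - x \<in> S)}"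
    by (rule measure_pmf.finite_measure_mono) simp
  also have "\<dots> \<le> (3/4) powr (card T' / 2)"
    using assms by (intro prob_pair_free_le) (auto simp: T'_def)
  also have "\<dots> \<le> (3/4) powr ((card T - (2 * real b + 1)) / 2)"
  proof -
    have "finite T" "finite N" using assms(1,3,5) finite_subset by auto
    then have "real (card T) \<le> card T' + 2 * real b + 1"
      using card_le_card_pairs_avoiding[of T N k] assms(4) unfolding T'_def by linarith
    then show ?thesis by (intro powr_mono') (auto simp: field_simps)
  qed
  also have "\<dots> = (3/4) powr (- (2 * real b + 1) / 2) * (3/4) powr (card T / 2)"
    unfolding powr_add[symmetric] by (rule arg_cong[where f = "\<lambda>t. (3/4::real) powr t"]) (simp add: field_simps)
  finally show ?thesis .
qed

theorem lemma9:
  fixes P :: "(real ^ 'D) set" and r :: real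
  assumes "polytope P"
    and "\<And>v. v extreme_point_of P \<Longrightarrow> \<forall>i. v $ i \<in> \<int>"
    and "r > 0"
  shows "\<exists>c>0. \<forall>n::nat. \<forall>F k. n \<ge> 1 \<longrightarrow> F \<subseteq> near_vertices r (dil n P) \<longrightarrow>
           k \<in> middle_pts r (sumset (dil n P) (dil n P)) \<longrightarrow>
           measure_pmf.prob
             (pmf_of_set {S. S \<subseteq> lattice_pts (dil n P) \<and> S \<inter> near_vertices r (dil n P) = F})
             {A. k \<notin> sumset A A}
           \<le> c * (3/4) powr (real (card (lattice_pts (dil n P \<inter> refl_set k (dil n P)))) / 2)"
proof -
  define b where "b = card {v. v extreme_point_of P} * card (lattice_pts (cball (0::real^'D) r))"
  have "bounded (dil n P)" for n
    unfolding dil_def using polytope_imp_bounded[OF assms(1)] by (rule bounded_scaling)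
  then show ?thesis
    using card_near_vertices_dil_le[OF assms(1,2), of _ r]
    by (intro exI[of _ "(3/4) powr (- (2 * real b + 1) / 2)"] conjI allI impI prob_notin_sumset_le
          finite_lattice_pts lattice_pts_Int_refl_set_closed)
       (auto simp: b_def middle_pts_def near_vertices_def lattice_pts_def)
qed

end
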